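(* Let $t\in\mathbb{Z}_+$ and let agent $i$ have binary values $v_i(g)\in\{0,1\}$ and quantile $\tau_i=\frac{t}{t+1}$. Let $B\subseteq M$ be a bundle containing exactly $\ell$ items of value $1$ for $i$. Then $v_i(B)=1$ if and only if the number of items in $B$ of value $0$ for $i$ is at most $\ell t-1$.
   Context: For a nonempty bundle $S\subseteq M$, order its items as $g_1,\dots,g_{|S|}$ with $v_i(g_1)\le\dots\le v_i(g_{|S|})$; then $v_i(S)=v_i(g_{\lceil \tau_i|S|\rceil})$ if $\tau_i>0$ and $v_i(S)=v_i(g_1)$ if $\tau_i=0$. *)

theory Defs
  imports Complex_Main "HOL-Library.Multiset"
begin

text \<open>Values of the items of a finite nonempty bundle S, sorted ascendingly
  (with multiplicity): the i-th entry (0-based) is v(g_(i+1)).\<close>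
definition sorted_values :: "('a \<Rightarrow> real) \<Rightarrow> 'a set \<Rightarrow> real list" where
  "sorted_values v S = sorted_list_of_multiset (image_mset v (mset_set S))"

text \<open>Quantile value of a nonempty bundle: v(g_{ceil(tau |S|)}) if tau > 0,
  and v(g_1) if tau = 0 (1-based indices as in the paper).\<close>
definition quantile_value :: "('a \<Rightarrow> real) \<Rightarrow> real \<Rightarrow> 'a set \<Rightarrow> real" where
  "quantile_value v \<tau> S =
     (if \<tau> > 0 then sorted_values v S ! (nat \<lceil>\<tau> * real (card S)\<rceil> - 1)
      else sorted_values v S ! 0)"

end

theory Submission
  imports Defs
begin

text \<open>For 0/1 values the sorted value list is a block of zeros followed by a block of ones, so
  the quantile item, at 1-based position \<open>\<lceil>\<tau> |B|\<rceil>\<close>, has value 1 exactly when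
  \<open>z < \<tau> |B|\<close>, where \<open>z\<close> is the number of zeros.  For \<open>\<tau> = t/(t+1)\<close> and
  \<open>|B| = z + \<ell>\<close> this inequality reads \<open>z < \<ell> t\<close>.\<close>

lemma card_binary_partition:
  fixes v :: "'a \<Rightarrow> 'b::zero_neq_one"
  assumes "finite S" and "\<forall>g\<in>S. v g \<in> {0, 1}"
  shows "card S = card {g \<in> S. v g = 0} + card {g \<in> S. v g = 1}"
proof -
  have "card S = card ({g \<in> S. v g = 0} \<union> {g \<in> S. v g = 1})"
    using assms(2) by (intro arg_cong[where f = card]) auto
  also have "\<dots> = card {g \<in> S. v g = 0} + card {g \<in> S. v g = 1}"
    by (rule card_Un_disjoint) (use assms(1) in auto)
  finally show ?thesis .
qed

lemma image_mset_mset_set_constant: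
  assumes "finite A" and "\<And>x. x \<in> A \<Longrightarrow> f x = c"
  shows "image_mset f (mset_set A) = replicate_mset (card A) c"
proof -
  have "image_mset f (mset_set A) = image_mset (\<lambda>_. c) (mset_set A)"
    by (rule image_mset_cong) (use assms in auto)
  then show ?thesis
    by (simp add: image_mset_const_eq assms(1))
qed

lemma sorted_values_binary:
  assumes "finite S" and "\<forall>g\<in>S. v g \<in> {0, 1}"
  shows "sorted_values v S =
           replicate (card {g \<in> S. v g = 0}) 0 @ replicate (card {g \<in> S. v g = 1}) 1"
    (is "_ = replicate ?z 0 @ replicate ?l 1")
proof -
  have "mset_set S = mset_set ({g \<in> S. v g = 0} \<union> {g \<in> S. v g = 1})"
    using assms(2) by (intro arg_cong[where f = mset_set]) auto
  also have "\<dots> = mset_set {g \<in> S. v g = 0} + mset_set {g \<in> S. v g = 1}"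
    by (rule mset_set_Union) (use assms(1) in auto)
  finally have "mset_set S = mset_set {g \<in> S. v g = 0} + mset_set {g \<in> S. v g = 1}" .
  moreover have "image_mset v (mset_set {g \<in> S. v g = 0}) = replicate_mset ?z 0"
    by (rule image_mset_mset_set_constant) (use assms(1) in auto)
  moreover have "image_mset v (mset_set {g \<in> S. v g = 1}) = replicate_mset ?l 1"
    by (rule image_mset_mset_set_constant) (use assms(1) in auto)
  ultimately have "image_mset v (mset_set S) = mset (replicate ?z 0 @ replicate ?l 1)"
    by simp
  then have "sorted_values v S = sort (replicate ?z 0 @ replicate ?l 1)"
    unfolding sorted_values_def by (simp only: sorted_list_of_multiset_mset)
  moreover have "sorted (replicate ?z (0::real) @ replicate ?l 1)"
    by (simp add: sorted_append)
  ultimately show ?thesis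
    by (simp only: sorted_sort_id)
qed

lemma nth_replicate_zeros_ones_eq_1_iff:
  assumes "k < z + l"
  shows "(replicate z (0::real) @ replicate l 1) ! k = 1 \<longleftrightarrow> z \<le> k"
  using assms by (auto simp: nth_append)

lemma nat_ceiling_minus_1_less:
  assumes "0 < \<tau>" and "\<tau> \<le> 1" and "0 < n"
  shows "nat \<lceil>\<tau> * real n\<rceil> - 1 < n"
proof -
  have "\<tau> * real n \<le> real n"
    using assms by (simp add: mult_le_cancel_right1)
  then have "\<lceil>\<tau> * real n\<rceil> \<le> int n"
    by (simp add: ceiling_le_iff)
  then show ?thesis
    using assms(3) by linarith
qed

lemma le_nat_ceiling_minus_1_iff:
  fixes z :: nat
  assumes "0 < x"
  shows "z \<le> nat \<lceil>x\<rceil> - 1 \<longleftrightarrow> real z < x"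
proof -
  have "1 \<le> \<lceil>x\<rceil>"
    using assms by (simp add: zero_less_ceiling)
  then have "z \<le> nat \<lceil>x\<rceil> - 1 \<longleftrightarrow> int z + 1 \<le> \<lceil>x\<rceil>"
    by linarith
  also have "\<dots> \<longleftrightarrow> real z < x"
    by (simp add: le_ceiling_iff)
  finally show ?thesis .
qed

lemma quantile_value_binary_eq_1_iff:
  assumes "finite S" and "S \<noteq> {}" and "\<forall>g\<in>S. v g \<in> {0, 1}"
    and "0 < \<tau>" and "\<tau> \<le> 1"
  shows "quantile_value v \<tau> S = 1 \<longleftrightarrow> real (card {g \<in> S. v g = 0}) < \<tau> * real (card S)"
proof -
  define k where "k = nat \<lceil>\<tau> * real (card S)\<rceil> - 1"
  have "0 < card S"
    using assms(1,2) by (simp add: card_gt_0_iff)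
  then have pos: "0 < \<tau> * real (card S)"
    and k_less: "k < card {g \<in> S. v g = 0} + card {g \<in> S. v g = 1}"
    using assms nat_ceiling_minus_1_less[of \<tau> "card S"] card_binary_partition[of S v]
    unfolding k_def by simp_all
  have "quantile_value v \<tau> S =
      (replicate (card {g \<in> S. v g = 0}) 0 @ replicate (card {g \<in> S. v g = 1}) 1) ! k"
    using assms(4) by (simp add: quantile_value_def sorted_values_binary[OF assms(1,3)] k_def)
  then show ?thesis
    using nth_replicate_zeros_ones_eq_1_iff[OF k_less] le_nat_ceiling_minus_1_iff[OF pos]
    unfolding k_def by simp
qed

theorem lemma2:
  fixes v :: "'a \<Rightarrow> real" and M B :: "'a set" and t l :: nat
  assumes "t > 0"
    and "finite M"
    and "B \<subseteq> M"
    and "B \<noteq> {}"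
    and "\<forall>g\<in>M. v g \<in> {0, 1}"
    and "card {g \<in> B. v g = 1} = l"
  shows "quantile_value v (real t / (real t + 1)) B = 1 \<longleftrightarrow>
         int (card {g \<in> B. v g = 0}) \<le> int l * int t - 1"
proof -
  define z where "z = card {g \<in> B. v g = 0}"
  have "finite B"
    using assms(2,3) finite_subset by blast
  moreover have "\<forall>g\<in>B. v g \<in> {0, 1}"
    using assms(3,5) by blast
  ultimately have "quantile_value v (real t / (real t + 1)) B = 1 \<longleftrightarrow>
      real z < real t / (real t + 1) * real (z + l)"
    using assms(1,4,6) quantile_value_binary_eq_1_iff[of B v] card_binary_partition[of B v]
    unfolding z_def by simp
  also have "\<dots> \<longleftrightarrow> real z < real l * real t"
    by (simp add: field_simps)
  also have "\<dots> \<longleftrightarrow> z < l * t"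
    by (metis of_nat_less_iff of_nat_mult)
  also have "\<dots> \<longleftrightarrow> int z \<le> int (l * t) - 1"
    by linarith
  finally show ?thesis
    unfolding z_def by simp
qed

end
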